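(* Let $0\le\gamma<1$ and let $f$ be analytic on $\Omega_\gamma$ with $|f(z)|\le1$ for all $z\in\Omega_\gamma$, and $f(z)=\sum_{n=0}^\infty a_nz^n$ for $z\in\mathbb{D}$. Then $$|a_n|\le\frac{1-|a_0|^2}{1+\gamma}\qquad\text{for all } n\ge1.$$
   Context: $\mathbb{D}$ is the open unit disk. For $0\le\gamma<1$, $\Omega_\gamma=\{z\in\mathbb{C}: |z+\frac{\gamma}{1-\gamma}|<\frac{1}{1-\gamma}\}$, a disk containing $\mathbb{D}$. *)

theory Defs
  imports "HOL-Complex_Analysis.Complex_Analysis"
begin

definition Omega :: "real \<Rightarrow> complex set" where
  "Omega \<gamma> = {z. cmod (z + complex_of_real (\<gamma> / (1 - \<gamma>))) < 1 / (1 - \<gamma>)}"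

end

theory Submission
  imports Defs
begin

text \<open>
  The map \<open>\<phi>(w) = (1 + \<gamma>) w / (1 + \<gamma> w)\<close> sends the unit disk into \<open>\<Omega>\<^sub>\<gamma>\<close> and fixes 0, so
  \<open>h = f \<circ> \<phi>\<close> is bounded by 1 on the disk with \<open>h(0) = a\<^sub>0\<close>. Its Taylor coefficients satisfy
  Wiener's inequality \<open>|b\<^sub>k| \<le> 1 - |b\<^sub>0|\<^sup>2\<close> for \<open>k \<ge> 1\<close>: averaging \<open>h\<close> over the \<open>k\<close>-th roots of
  unity leaves \<open>b\<^sub>0 + b\<^sub>k z\<^sup>k + \<dots>\<close>, and the Schwarz-Pick argument applied to this average bounds
  \<open>b\<^sub>k\<close>. Conversely \<open>f = h \<circ> \<psi>\<close> with \<open>\<psi>(z) = z / (1 + \<gamma> - \<gamma> z)\<close>, whose Taylor coefficients are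
  nonnegative. Expanding \<open>a\<^sub>n = \<Sum>\<^sub>i b\<^sub>i [z\<^sup>n] \<psi>\<^sup>i\<close> therefore gives
  \<open>|a\<^sub>n| \<le> (1 - |a\<^sub>0|\<^sup>2) \<Sum>\<^bsub>i \<ge> 1\<^esub> [z\<^sup>n] \<psi>\<^sup>i = (1 - |a\<^sub>0|\<^sup>2) [z\<^sup>n] \<psi>/(1 - \<psi>)\<close>, and
  \<open>\<psi>/(1 - \<psi>) = z / ((1 + \<gamma>)(1 - z))\<close> has all coefficients \<open>1/(1 + \<gamma>)\<close>.
\<close>

unbundle no vec_syntax

lemma fps_conv_radius_ge_of_sums:
  fixes c :: "nat \<Rightarrow> complex"
  assumes "\<And>z. z \<in> ball 0 r \<Longrightarrow> (\<lambda>n. c n * z ^ n) sums g z"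
  shows "fps_conv_radius (Abs_fps c) \<ge> ereal r"
  unfolding fps_conv_radius_def
proof (rule conv_radius_geI_ex')
  fix r' :: real assume "0 < r'" "ereal r' < ereal r"
  then have "of_real r' \<in> ball (0::complex) r" by auto
  from assms[OF this] show "summable (\<lambda>n. fps_nth (Abs_fps c) n * of_real r' ^ n)"
    by (auto simp: sums_iff)
qed

lemma has_fps_expansion_of_sums:
  fixes c :: "nat \<Rightarrow> complex"
  assumes "r > 0" and "\<And>z. z \<in> ball 0 r \<Longrightarrow> (\<lambda>n. c n * z ^ n) sums g z"
  shows "g has_fps_expansion Abs_fps c"
  unfolding has_fps_expansion_def
proof
  show "0 < fps_conv_radius (Abs_fps c)"
    using fps_conv_radius_ge_of_sums[OF assms(2)] \<open>r > 0\<close> by (meson ereal_less(2) less_le_trans)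
  have "eventually (\<lambda>z. z \<in> ball 0 r) (nhds (0::complex))"
    using \<open>r > 0\<close> by (intro eventually_nhds_in_open) auto
  then show "\<forall>\<^sub>F z in nhds 0. eval_fps (Abs_fps c) z = g z"
    by eventually_elim (use assms(2) in \<open>auto simp: eval_fps_def sums_iff\<close>)
qed

lemma holomorphic_on_ball_of_sums:
  fixes c :: "nat \<Rightarrow> complex"
  assumes "\<And>z. z \<in> ball 0 r \<Longrightarrow> (\<lambda>n. c n * z ^ n) sums g z"
  shows "g holomorphic_on ball 0 r"
proof (rule holomorphic_transform)
  have "ball 0 r \<subseteq> eball 0 (fps_conv_radius (Abs_fps c))"
    using fps_conv_radius_ge_of_sums[OF assms] by (metis eball_ereal eball_mono)
  then show "eval_fps (Abs_fps c) holomorphic_on ball 0 r"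
    by (rule holomorphic_on_eval_fps)
  show "eval_fps (Abs_fps c) z = g z" if "z \<in> ball 0 r" for z
    using assms[OF that] by (simp add: eval_fps_def sums_iff)
qed

lemma fps_compose_eq_of_has_fps_expansion:
  fixes f g h :: "complex \<Rightarrow> complex" and F G H :: "complex fps"
  assumes "f has_fps_expansion F" "g has_fps_expansion G" "G $ 0 = 0"
    and "h has_fps_expansion H" "eventually (\<lambda>z. f (g z) = h z) (nhds 0)"
  shows "F oo G = H"
proof -
  have "(f \<circ> g) has_fps_expansion (F oo G)"
    by (rule has_fps_expansion_compose) fact+
  moreover have "(f \<circ> g) has_fps_expansion (F oo G) \<longleftrightarrow> h has_fps_expansion (F oo G)"
    by (rule has_fps_expansion_cong) (use assms(5) in auto)
  ultimately have "h has_fps_expansion (F oo G)"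
    by simp
  with assms(4) show ?thesis
    by (rule fps_expansion_unique_complex[symmetric])
qed

lemma has_fps_expansion_shifted_geometric:
  fixes c q :: complex
  assumes "cmod q \<le> 1"
  shows "(\<lambda>z. c * z / (1 - q * z)) has_fps_expansion
           Abs_fps (\<lambda>m. if m = 0 then 0 else c * q ^ (m - 1))"
proof (rule has_fps_expansion_of_sums[of 1])
  fix z :: complex assume "z \<in> ball 0 1"
  then have "cmod (q * z) < 1"
    using assms by (simp add: norm_mult) (meson le_less_trans mult_left_le_one_le norm_ge_zero)
  then have "(\<lambda>m. c * z * (q * z) ^ m) sums (c * z * (1 / (1 - q * z)))"
    by (intro sums_mult geometric_sums)
  then have "(\<lambda>m. (if Suc m = 0 then 0 else c * q ^ (Suc m - 1)) * z ^ Suc m) sums (c * z / (1 - q * z))"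
    by (simp add: power_mult_distrib mult_ac)
  from sums_Suc[OF this]
  show "(\<lambda>m. (if m = 0 then 0 else c * q ^ (m - 1)) * z ^ m) sums (c * z / (1 - q * z))"
    by simp
qed simp

lemma norm_one_minus_cnj_mult_squared:
  fixes a u :: complex
  shows "(cmod (1 - cnj a * u))\<^sup>2 = (cmod (u - a))\<^sup>2 + (1 - (cmod a)\<^sup>2) * (1 - (cmod u)\<^sup>2)"
proof -
  have "complex_of_real ((cmod (1 - cnj a * u))\<^sup>2 - (cmod (u - a))\<^sup>2)
        = (1 - cnj a * u) * cnj (1 - cnj a * u) - (u - a) * cnj (u - a)"
    by (simp only: of_real_diff complex_norm_square)
  also have "\<dots> = 1 + (a * cnj a) * (u * cnj u) - u * cnj u - a * cnj a"
    by (simp add: algebra_simps)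
  also have "\<dots> = complex_of_real ((1 - (cmod a)\<^sup>2) * (1 - (cmod u)\<^sup>2))"
    by (simp add: complex_norm_square[symmetric] algebra_simps)
  finally show ?thesis
    using of_real_eq_iff by (metis add_diff_cancel_left' diff_add_cancel)
qed

lemma norm_diff_le_norm_one_minus_cnj_mult:
  fixes a u :: complex
  assumes "cmod a < 1" "cmod u \<le> 1"
  shows "cmod (u - a) \<le> cmod (1 - cnj a * u)"
proof (rule power2_le_imp_le)
  have "(1 - (cmod a)\<^sup>2) * (1 - (cmod u)\<^sup>2) \<ge> 0"
    using assms by (intro mult_nonneg_nonneg) (auto simp: power_le_one abs_square_le_1)
  then show "(cmod (u - a))\<^sup>2 \<le> (cmod (1 - cnj a * u))\<^sup>2"
    unfolding norm_one_minus_cnj_mult_squared by linarith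
qed simp

lemma norm_diff_less_norm_one_minus_cnj_mult:
  fixes a u :: complex
  assumes "cmod a < 1" "cmod u < 1"
  shows "cmod (u - a) < cmod (1 - cnj a * u)"
proof (rule power2_less_imp_less)
  have "(1 - (cmod a)\<^sup>2) * (1 - (cmod u)\<^sup>2) > 0"
    using assms by (intro mult_pos_pos) (auto simp: abs_square_less_1)
  then show "(cmod (u - a))\<^sup>2 < (cmod (1 - cnj a * u))\<^sup>2"
    unfolding norm_one_minus_cnj_mult_squared by linarith
qed simp

lemma sum_powers_root_of_unity:
  fixes k n :: nat
  assumes "k \<ge> 1"
  defines "\<omega> \<equiv> exp (2 * of_real pi * \<i> / of_nat k)"
  shows "(\<Sum>j<k. (\<omega> ^ n) ^ j) = (if k dvd n then of_nat k else 0)"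
proof -
  have pw: "\<omega> ^ m = exp (2 * of_real pi * \<i> * of_nat m / of_nat k)" for m
    unfolding \<omega>_def by (simp add: exp_of_nat_mult[symmetric] algebra_simps)
  show ?thesis
  proof (cases "k dvd n")
    case True
    then obtain m where m: "n = k * m" by blast
    have "\<omega> ^ n = exp (of_nat m * (2 * of_real pi * \<i>))"
      using assms(1) by (simp add: pw m field_simps)
    also have "\<dots> = 1" by (simp add: exp_of_nat_mult)
    finally show ?thesis using True by simp
  next
    case False
    have "\<omega> ^ n \<noteq> 1"
    proof
      assume "\<omega> ^ n = 1"
      then obtain m :: int where "Im (2 * of_real pi * \<i> * of_nat n / of_nat k) = of_int (2 * m) * pi"
        unfolding pw exp_eq_1 by blast
      then have "real n = real k * m" using assms(1) by (simp add: field_simps)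
      then have "int n = int k * m" by (metis of_int_eq_iff of_int_mult of_int_of_nat_eq)
      then show False using False by (metis dvd_triv_left int_dvd_int_iff)
    qed
    moreover have "(\<omega> ^ n) ^ k = 1"
      using assms(1) unfolding power_mult[symmetric] pw
      by (simp add: field_simps exp_of_nat_mult[symmetric])
    ultimately show ?thesis using False by (simp add: sum_gp_strict)
  qed
qed

lemma sums_root_of_unity_average:
  fixes b :: "nat \<Rightarrow> complex" and k :: nat
  assumes "k \<ge> 1" and "\<And>w. w \<in> ball 0 1 \<Longrightarrow> (\<lambda>n. b n * w ^ n) sums h w"
    and "z \<in> ball 0 1"
  defines "\<omega> \<equiv> exp (2 * of_real pi * \<i> / of_nat k)"
  shows "(\<lambda>n. (if k dvd n then b n else 0) * z ^ n) sums ((\<Sum>j<k. h (\<omega> ^ j * z)) / of_nat k)"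
proof -
  have "cmod \<omega> = 1" unfolding \<omega>_def by simp
  then have "\<omega> ^ j * z \<in> ball 0 1" for j
    using assms(3) by (simp add: norm_mult norm_power)
  then have "(\<lambda>n. \<Sum>j<k. b n * (\<omega> ^ j * z) ^ n) sums (\<Sum>j<k. h (\<omega> ^ j * z))"
    by (intro sums_sum assms(2))
  then have "(\<lambda>n. (\<Sum>j<k. b n * (\<omega> ^ j * z) ^ n) / of_nat k) sums ((\<Sum>j<k. h (\<omega> ^ j * z)) / of_nat k)"
    by (rule sums_divide)
  moreover have "(\<Sum>j<k. b n * (\<omega> ^ j * z) ^ n) / of_nat k = (if k dvd n then b n else 0) * z ^ n" for n
  proof -
    have "(\<Sum>j<k. b n * (\<omega> ^ j * z) ^ n) = b n * z ^ n * (\<Sum>j<k. (\<omega> ^ n) ^ j)"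
      by (simp add: sum_distrib_left power_mult_distrib power_mult[symmetric] mult.commute mult.left_commute)
    then show ?thesis
      using assms(1) by (simp add: sum_powers_root_of_unity[OF assms(1)] \<omega>_def)
  qed
  ultimately show ?thesis by simp
qed

lemma sums_lacunary_quotient:
  fixes d :: "nat \<Rightarrow> complex"
  assumes "(\<lambda>n. d n * z ^ n) sums s" and "\<And>i. 0 < i \<Longrightarrow> i < k \<Longrightarrow> d i = 0"
    and "k \<ge> 1" and "z \<noteq> 0"
  shows "(\<lambda>i. d (i + k) * z ^ i) sums ((s - d 0) / z ^ k)"
proof -
  have "(\<Sum>i<k. d i * z ^ i) = (\<Sum>i\<in>{0}. d i * z ^ i)"
    by (rule sum.mono_neutral_right) (use assms(2,3) in auto)
  then have "(\<lambda>i. d (i + k) * z ^ (i + k)) sums (s - d 0)"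
    using sums_iff_shift[of "\<lambda>n. d n * z ^ n" k "s - d 0"] assms(1) by simp
  then have "(\<lambda>i. d (i + k) * z ^ (i + k) / z ^ k) sums ((s - d 0) / z ^ k)"
    by (rule sums_divide)
  then show ?thesis
    using assms(4) by (simp add: power_add)
qed

lemma norm_at_0_le_one_of_power_bound:
  fixes q :: "complex \<Rightarrow> complex"
  assumes "q holomorphic_on ball 0 1"
    and "\<And>x. x \<in> ball 0 1 \<Longrightarrow> x \<noteq> 0 \<Longrightarrow> cmod (q x) * cmod x ^ k \<le> 1"
  shows "cmod (q 0) \<le> 1"
proof (rule field_le_mult_one_interval)
  fix t :: real assume t: "0 < t" "t < 1"
  define r where "r = root (Suc k) t"
  have r: "0 < r" "r < 1"
    using t by (auto simp: r_def real_root_gt_zero)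
  have "norm ((deriv ^^ 0) q 0) \<le> fact 0 * (1 / r ^ k) / r ^ 0"
  proof (rule Cauchy_inequality)
    show "q holomorphic_on ball 0 r" "continuous_on (cball 0 r) q"
      using r by (auto intro!: holomorphic_on_subset[OF assms(1)] holomorphic_on_imp_continuous_on)
    show "cmod (q x) \<le> 1 / r ^ k" if "norm (0 - x) = r" for x
    proof -
      have "x \<in> ball 0 1" "x \<noteq> 0"
        using that r by auto
      then show ?thesis
        using assms(2)[of x] that r by (simp add: field_simps)
    qed
  qed fact
  then have "r ^ k * cmod (q 0) \<le> 1"
    using r by (simp add: field_simps)
  moreover have "t * cmod (q 0) \<le> r ^ k * cmod (q 0)"
  proof (rule mult_right_mono)
    have "t = r ^ Suc k" using t unfolding r_def by (simp only: real_root_pow_pos2 zero_less_Suc less_imp_le)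
    also have "\<dots> \<le> r ^ k" using r by (simp add: mult_left_le_one_le)
    finally show "t \<le> r ^ k" .
  qed simp
  ultimately show "t * cmod (q 0) \<le> 1" by linarith
qed

lemma norm_coeff_le_of_lacunary_series:
  fixes d :: "nat \<Rightarrow> complex" and H :: "complex \<Rightarrow> complex"
  assumes "k \<ge> 1"
    and sums: "\<And>z. z \<in> ball 0 1 \<Longrightarrow> (\<lambda>n. d n * z ^ n) sums H z"
    and bounded: "\<And>z. z \<in> ball 0 1 \<Longrightarrow> cmod (H z) \<le> 1"
    and gap: "\<And>i. 0 < i \<Longrightarrow> i < k \<Longrightarrow> d i = 0"
    and "cmod (d 0) < 1"
  shows "cmod (d k) \<le> 1 - (cmod (d 0))\<^sup>2"
proof -
  define a where "a = d 0"
  have "cmod a < 1" using assms(5) by (simp add: a_def)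
  have H0: "H 0 = a"
    using sums[of 0] by (simp add: a_def)
  define R where "R z = (if z = 0 then d k else (H z - a) / z ^ k)" for z
  have "(\<lambda>i. d (i + k) * z ^ i) sums R z" if "z \<in> ball 0 1" for z
  proof (cases "z = 0")
    case True
    then show ?thesis
      unfolding R_def using powser_sums_zero[of "\<lambda>i. d (i + k)"] by simp
  next
    case False
    then show ?thesis
      unfolding R_def a_def using sums_lacunary_quotient[OF sums[OF that] gap \<open>k \<ge> 1\<close>] by simp
  qed
  then have "R holomorphic_on ball 0 1"
    by (rule holomorphic_on_ball_of_sums)
  moreover have "H holomorphic_on ball 0 1"
    using sums by (rule holomorphic_on_ball_of_sums)
  moreover have denom: "1 - cnj a * H z \<noteq> 0" if "z \<in> ball 0 1" for z
  proof -
    have "cmod (cnj a * H z) < 1"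
      using \<open>cmod a < 1\<close> bounded[OF that]
      by (simp add: norm_mult) (meson le_less_trans mult_left_le norm_ge_zero)
    then show ?thesis by auto
  qed
  \<comment> \<open>the Moebius normalisation \<open>(H - a) / (1 - cnj a H)\<close> of \<open>H\<close>, divided by \<open>z\<^sup>k\<close>\<close>
  ultimately have "(\<lambda>z. R z / (1 - cnj a * H z)) holomorphic_on ball 0 1"
    by (intro holomorphic_intros) auto
  moreover have "cmod (R x / (1 - cnj a * H x)) * cmod x ^ k \<le> 1" if "x \<in> ball 0 1" "x \<noteq> 0" for x
  proof -
    have "cmod (R x / (1 - cnj a * H x)) * cmod x ^ k = cmod (H x - a) / cmod (1 - cnj a * H x)"
      using that by (simp add: R_def norm_divide norm_power norm_mult)
    also have "\<dots> \<le> 1"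
      using norm_diff_le_norm_one_minus_cnj_mult[OF \<open>cmod a < 1\<close> bounded[OF that(1)]] denom[OF that(1)]
      by simp
    finally show ?thesis .
  qed
  ultimately have "cmod (R 0 / (1 - cnj a * H 0)) \<le> 1"
    by (rule norm_at_0_le_one_of_power_bound)
  moreover have "1 - cnj a * H 0 = of_real (1 - (cmod a)\<^sup>2)"
    using complex_norm_square[of a] by (simp add: H0 mult.commute)
  moreover have "1 - (cmod a)\<^sup>2 > 0"
    using \<open>cmod a < 1\<close> by (simp add: abs_square_less_1)
  ultimately have "cmod (d k) / (1 - (cmod a)\<^sup>2) \<le> 1"
    by (simp add: R_def norm_divide del: of_real_diff)
  with \<open>1 - (cmod a)\<^sup>2 > 0\<close> show ?thesis
    by (simp add: a_def field_simps)
qed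

theorem norm_coeff_le_of_bounded_power_series:
  fixes b :: "nat \<Rightarrow> complex" and h :: "complex \<Rightarrow> complex"
  assumes sums: "\<And>z. z \<in> ball 0 1 \<Longrightarrow> (\<lambda>n. b n * z ^ n) sums h z"
    and bounded: "\<And>z. z \<in> ball 0 1 \<Longrightarrow> cmod (h z) \<le> 1"
    and "k \<ge> 1"
  shows "cmod (b k) \<le> 1 - (cmod (b 0))\<^sup>2"
proof (cases "cmod (b 0) = 1")
  case True
  have "h 0 = b 0"
    using sums[of 0] by simp
  have "h constant_on ball 0 1"
    using holomorphic_on_ball_of_sums[OF sums] bounded True \<open>h 0 = b 0\<close>
    by (intro maximum_modulus_principle[of h "ball 0 1" "ball 0 1" 0]) auto
  then obtain c where "\<And>z. z \<in> ball 0 1 \<Longrightarrow> h z = c"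
    unfolding constant_on_def by blast
  then have "eventually (\<lambda>z. h z = c) (nhds 0)"
    using eventually_nhds_in_open[of "ball 0 1" 0] by (auto elim!: eventually_mono)
  then have "h has_fps_expansion fps_const c"
    using has_fps_expansion_cong[of h "\<lambda>_. c"] has_fps_expansion_const by blast
  moreover have "h has_fps_expansion Abs_fps b"
    by (rule has_fps_expansion_of_sums[OF zero_less_one sums])
  ultimately have "Abs_fps b = fps_const c"
    by (rule fps_expansion_unique_complex[symmetric])
  then have "b k = fps_const c $ k"
    by (metis fps_nth_Abs_fps)
  with \<open>k \<ge> 1\<close> True show ?thesis
    by simp
next
  case False
  define \<omega> where "\<omega> = exp (2 * of_real pi * \<i> / of_nat k)"
  define d where "d n = (if k dvd n then b n else 0)" for n
  define H where "H z = (\<Sum>j<k. h (\<omega> ^ j * z)) / of_nat k" for z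
  have "(\<lambda>n. d n * z ^ n) sums H z" if "z \<in> ball 0 1" for z
    unfolding d_def H_def \<omega>_def by (rule sums_root_of_unity_average[OF \<open>k \<ge> 1\<close> sums that])
  moreover have "cmod (H z) \<le> 1" if "z \<in> ball 0 1" for z
  proof -
    have "cmod \<omega> = 1" unfolding \<omega>_def by simp
    then have "cmod (\<Sum>j<k. h (\<omega> ^ j * z)) \<le> (\<Sum>j<k. 1)"
      using that by (intro order.trans[OF norm_sum sum_mono] bounded) (simp add: norm_mult norm_power)
    then show ?thesis
      using \<open>k \<ge> 1\<close> by (simp add: H_def norm_divide)
  qed
  moreover have "d i = 0" if "0 < i" "i < k" for i
    using that by (auto simp: d_def dest: dvd_imp_le)
  moreover have "cmod (d 0) < 1"
    using False bounded[of 0] sums[of 0] by (simp add: d_def)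
  ultimately have "cmod (d k) \<le> 1 - (cmod (d 0))\<^sup>2"
    by (rule norm_coeff_le_of_lacunary_series[OF \<open>k \<ge> 1\<close>])
  then show ?thesis
    by (simp add: d_def)
qed

lemma fps_power_nth_nonneg_real:
  fixes F :: "complex fps"
  assumes "\<And>m. Im (F $ m) = 0 \<and> Re (F $ m) \<ge> 0"
  shows "Im ((F ^ i) $ n) = 0 \<and> Re ((F ^ i) $ n) \<ge> 0"
proof (induction i arbitrary: n)
  case (Suc i)
  have "Im (F $ j * (F ^ i) $ (n - j)) = 0 \<and> Re (F $ j * (F ^ i) $ (n - j)) \<ge> 0" for j
    using assms[of j] Suc.IH[of "n - j"] by simp
  then show ?case
    by (simp add: fps_mult_nth sum_nonneg)
qed simp

lemma norm_fps_compose_nth_le: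
  fixes B G :: "complex fps"
  assumes "\<And>i. i \<ge> 1 \<Longrightarrow> cmod (B $ i) \<le> M" and "n \<ge> 1"
  shows "cmod ((B oo G) $ n) \<le> M * (\<Sum>i=1..n. cmod ((G ^ i) $ n))"
proof -
  have "(B oo G) $ n = (\<Sum>i=1..n. B $ i * (G ^ i) $ n)"
    using \<open>n \<ge> 1\<close> by (simp add: fps_compose_nth sum.atLeast_Suc_atMost)
  also have "cmod \<dots> \<le> (\<Sum>i=1..n. M * cmod ((G ^ i) $ n))"
    by (intro order.trans[OF norm_sum] sum_mono) (simp add: norm_mult assms(1) mult_right_mono)
  finally show ?thesis
    by (simp add: sum_distrib_left)
qed

lemma one_plus_of_real_neq_zero:
  fixes \<gamma> :: real
  assumes "0 \<le> \<gamma>"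
  shows "1 + complex_of_real \<gamma> \<noteq> 0"
  using assms by (metis of_real_1 of_real_add of_real_eq_0_iff add_nonneg_eq_0_iff zero_le_one one_neq_zero)

definition to_Omega :: "real \<Rightarrow> complex \<Rightarrow> complex" where
  "to_Omega \<gamma> w = (1 + of_real \<gamma>) * w / (1 + of_real \<gamma> * w)"

definition from_Omega :: "real \<Rightarrow> complex \<Rightarrow> complex" where
  "from_Omega \<gamma> z = z / (1 + of_real \<gamma> - of_real \<gamma> * z)"

definition from_Omega_fps :: "real \<Rightarrow> complex fps" where
  "from_Omega_fps \<gamma> = Abs_fps (\<lambda>m. if m = 0 then 0 else of_real (\<gamma> ^ (m - 1) / (1 + \<gamma>) ^ m))"

lemma
  fixes \<gamma> :: real and w :: complex
  assumes "0 \<le> \<gamma>" "\<gamma> < 1" "w \<in> ball 0 1"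
  shows to_Omega_in_Omega: "to_Omega \<gamma> w \<in> Omega \<gamma>"
    and to_Omega_denominator_nonzero: "1 + of_real \<gamma> * w \<noteq> 0"
proof -
  have less: "cmod (w + of_real \<gamma>) < cmod (1 + of_real \<gamma> * w)"
    using norm_diff_less_norm_one_minus_cnj_mult[of "- of_real \<gamma>" w] assms by simp
  then show "1 + of_real \<gamma> * w \<noteq> 0"
    by auto
  then have "to_Omega \<gamma> w + of_real (\<gamma> / (1 - \<gamma>))
      = (w + of_real \<gamma>) / (of_real (1 - \<gamma>) * (1 + of_real \<gamma> * w))"
    using assms(2) by (simp add: to_Omega_def field_simps)
  then have "cmod (to_Omega \<gamma> w + of_real (\<gamma> / (1 - \<gamma>)))
      = cmod (w + of_real \<gamma>) / cmod (1 + of_real \<gamma> * w) / (1 - \<gamma>)"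
    using assms(2) by (simp add: norm_divide norm_mult del: of_real_diff)
  also have "\<dots> < 1 / (1 - \<gamma>)"
    using less assms(2) norm_ge_zero[of "w + of_real \<gamma>"]
    by (intro divide_strict_right_mono) (auto simp: divide_less_eq_1)
  finally show "to_Omega \<gamma> w \<in> Omega \<gamma>"
    by (simp add: Omega_def)
qed

lemma holomorphic_on_to_Omega:
  assumes "0 \<le> \<gamma>" "\<gamma> < 1"
  shows "to_Omega \<gamma> holomorphic_on ball 0 1"
  unfolding to_Omega_def[abs_def]
  using to_Omega_denominator_nonzero[OF assms] by (intro holomorphic_intros) auto

lemma from_Omega_denominator_nonzero:
  fixes \<gamma> :: real and z :: complex
  assumes "0 \<le> \<gamma>" "z \<in> ball 0 1"
  shows "1 + of_real \<gamma> - of_real \<gamma> * z \<noteq> 0"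
proof
  assume "1 + of_real \<gamma> - of_real \<gamma> * z = 0"
  then have "1 + \<gamma> = cmod (of_real \<gamma> * z)"
    using assms(1) by (metis eq_iff_diff_eq_0 norm_of_real of_real_1 of_real_add abs_of_nonneg add_nonneg_nonneg zero_le_one)
  also have "\<dots> \<le> \<gamma>"
    using assms by (simp add: norm_mult mult_left_le)
  finally show False by simp
qed

lemma to_Omega_from_Omega:
  assumes "0 \<le> \<gamma>" "z \<in> ball 0 1"
  shows "to_Omega \<gamma> (from_Omega \<gamma> z) = z"
proof -
  note one_plus_of_real_neq_zero[OF assms(1)]
  moreover have "1 + of_real \<gamma> * from_Omega \<gamma> z = (1 + of_real \<gamma>) / (1 + of_real \<gamma> - of_real \<gamma> * z)"
    using from_Omega_denominator_nonzero[OF assms] by (simp add: from_Omega_def field_simps)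
  ultimately show ?thesis
    using from_Omega_denominator_nonzero[OF assms] by (simp add: to_Omega_def from_Omega_def)
qed

lemma from_Omega_has_fps_expansion:
  assumes "0 \<le> \<gamma>"
  shows "from_Omega \<gamma> has_fps_expansion from_Omega_fps \<gamma>"
proof -
  define c where "c = complex_of_real (1 / (1 + \<gamma>))"
  define q where "q = complex_of_real (\<gamma> / (1 + \<gamma>))"
  have "cmod q \<le> 1"
    unfolding q_def norm_of_real using assms by simp
  then have "(\<lambda>z. c * z / (1 - q * z)) has_fps_expansion Abs_fps (\<lambda>m. if m = 0 then 0 else c * q ^ (m - 1))"
    by (rule has_fps_expansion_shifted_geometric)
  moreover have "(\<lambda>z. c * z / (1 - q * z)) = from_Omega \<gamma>"
  proof
    fix z
    have "(1 + of_real \<gamma>) * (1 - q * z) = 1 + of_real \<gamma> - of_real \<gamma> * z"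
      using one_plus_of_real_neq_zero[OF assms] by (simp add: q_def field_simps)
    then show "c * z / (1 - q * z) = from_Omega \<gamma> z"
      by (simp add: c_def from_Omega_def divide_divide_eq_left')
  qed
  moreover have "Abs_fps (\<lambda>m. if m = 0 then 0 else c * q ^ (m - 1)) = from_Omega_fps \<gamma>"
    by (auto simp: fps_eq_iff from_Omega_fps_def c_def q_def power_divide power_Suc[symmetric])
  ultimately show ?thesis
    by simp
qed

lemma from_Omega_div_one_minus_from_Omega:
  fixes \<gamma> :: real and z :: complex
  assumes "0 \<le> \<gamma>" "z \<in> ball 0 1"
  shows "from_Omega \<gamma> z / (1 - from_Omega \<gamma> z) = z / ((1 + of_real \<gamma>) * (1 - z))"
proof -
  have factor: "1 + of_real \<gamma> - of_real \<gamma> * z - z = (1 + of_real \<gamma>) * (1 - z)"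
    by (simp add: algebra_simps)
  have "1 - z \<noteq> 0"
    using assms(2) by auto
  with one_plus_of_real_neq_zero[OF assms(1)] have "1 + of_real \<gamma> - of_real \<gamma> * z - z \<noteq> 0"
    unfolding factor by simp
  with from_Omega_denominator_nonzero[OF assms] show ?thesis
    by (simp add: from_Omega_def divide_simps flip: factor)
qed

lemma sum_norm_from_Omega_fps_powers_nth:
  fixes \<gamma> :: real
  assumes "0 \<le> \<gamma>" "n \<ge> 1"
  shows "(\<Sum>i=1..n. cmod ((from_Omega_fps \<gamma> ^ i) $ n)) = 1 / (1 + \<gamma>)"
proof -
  define G where "G = from_Omega_fps \<gamma>"
  define c where "c = complex_of_real (1 / (1 + \<gamma>))"
  have nonneg: "Im ((G ^ i) $ m) = 0 \<and> Re ((G ^ i) $ m) \<ge> 0" for i m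
    using assms(1) by (intro fps_power_nth_nonneg_real) (simp add: G_def from_Omega_fps_def)
  \<comment> \<open>composing \<open>z / (1 - z)\<close>, whose coefficients are all 1, with \<open>\<psi>\<close> sums the powers of \<open>\<psi>\<close>\<close>
  have "Abs_fps (\<lambda>m. if m = 0 then 0 else 1) oo G = Abs_fps (\<lambda>m. if m = 0 then 0 else c)"
  proof (rule fps_compose_eq_of_has_fps_expansion)
    show "(\<lambda>z :: complex. z / (1 - z)) has_fps_expansion Abs_fps (\<lambda>m. if m = 0 then 0 else 1)"
      using has_fps_expansion_shifted_geometric[where c = 1 and q = 1] by (simp cong: if_cong)
    show "(\<lambda>z. c * z / (1 - z)) has_fps_expansion Abs_fps (\<lambda>m. if m = 0 then 0 else c)"
      using has_fps_expansion_shifted_geometric[where c = c and q = 1] by (simp cong: if_cong)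
    show "from_Omega \<gamma> has_fps_expansion G" "G $ 0 = 0"
      using from_Omega_has_fps_expansion[OF assms(1)] by (simp_all add: G_def from_Omega_fps_def)
    have "eventually (\<lambda>z. z \<in> ball 0 1) (nhds (0::complex))"
      by (intro eventually_nhds_in_open) auto
    then show "\<forall>\<^sub>F z in nhds 0. from_Omega \<gamma> z / (1 - from_Omega \<gamma> z) = c * z / (1 - z)"
      by eventually_elim (simp add: from_Omega_div_one_minus_from_Omega[OF assms(1)] c_def)
  qed
  have "(\<Sum>i=1..n. (G ^ i) $ n) = (\<Sum>i=0..n. (if i = 0 then 0 else 1) * (G ^ i) $ n)"
    by (subst (2) sum.atLeast_Suc_atMost) (auto intro!: sum.cong)
  also have "\<dots> = (Abs_fps (\<lambda>m. if m = 0 then 0 else 1) oo G) $ n"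
    by (simp add: fps_compose_nth)
  also have "\<dots> = c"
    using \<open>_ oo G = _\<close> assms(2) by simp
  finally have "(\<Sum>i=1..n. (G ^ i) $ n) = c" .
  moreover have "cmod ((G ^ i) $ n) = Re ((G ^ i) $ n)" for i
    using nonneg[of i n] by (simp add: cmod_eq_Re)
  ultimately show ?thesis
    by (simp add: G_def c_def flip: Re_sum)
qed

theorem lemma2:
  fixes \<gamma> :: real and f :: "complex \<Rightarrow> complex" and a :: "nat \<Rightarrow> complex"
  assumes "0 \<le> \<gamma>" and "\<gamma> < 1"
    and "f holomorphic_on Omega \<gamma>"
    and "\<And>z. z \<in> Omega \<gamma> \<Longrightarrow> cmod (f z) \<le> 1"
    and "\<And>z. z \<in> ball 0 1 \<Longrightarrow> (\<lambda>n. a n * z ^ n) sums f z"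
    and "n \<ge> 1"
  shows "cmod (a n) \<le> (1 - (cmod (a 0))\<^sup>2) / (1 + \<gamma>)"
proof -
  define h where "h = f \<circ> to_Omega \<gamma>"
  have "h holomorphic_on ball 0 1"
    unfolding h_def using assms(1-3) to_Omega_in_Omega
    by (intro holomorphic_on_compose_gen[OF holomorphic_on_to_Omega]) auto
  define b where "b m = (deriv ^^ m) h 0 / fact m" for m
  have b_sums: "(\<lambda>m. b m * z ^ m) sums h z" if "z \<in> ball 0 1" for z
    using holomorphic_power_series[OF \<open>h holomorphic_on ball 0 1\<close> that] by (simp add: b_def)
  have "b 0 = a 0"
    using b_sums[of 0] assms(5)[of 0] by (simp add: h_def to_Omega_def)
  have b_bound: "cmod (b i) \<le> 1 - (cmod (a 0))\<^sup>2" if "i \<ge> 1" for i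
    using norm_coeff_le_of_bounded_power_series[OF b_sums _ that] assms(1,2,4) to_Omega_in_Omega
      \<open>b 0 = a 0\<close> by (simp add: h_def)
  have "Abs_fps b oo from_Omega_fps \<gamma> = Abs_fps a"
  proof (rule fps_compose_eq_of_has_fps_expansion)
    show "h has_fps_expansion Abs_fps b" "f has_fps_expansion Abs_fps a"
      using b_sums assms(5) by (auto intro: has_fps_expansion_of_sums[of 1])
    show "from_Omega \<gamma> has_fps_expansion from_Omega_fps \<gamma>"
      using assms(1) by (rule from_Omega_has_fps_expansion)
    show "from_Omega_fps \<gamma> $ 0 = 0"
      by (simp add: from_Omega_fps_def)
    have "eventually (\<lambda>z. z \<in> ball 0 1) (nhds (0::complex))"
      by (intro eventually_nhds_in_open) auto
    then show "\<forall>\<^sub>F z in nhds 0. h (from_Omega \<gamma> z) = f z"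
      by eventually_elim (simp add: h_def to_Omega_from_Omega[OF assms(1)])
  qed
  then have "cmod (a n) = cmod ((Abs_fps b oo from_Omega_fps \<gamma>) $ n)"
    by simp
  also have "\<dots> \<le> (1 - (cmod (a 0))\<^sup>2) * (\<Sum>i=1..n. cmod ((from_Omega_fps \<gamma> ^ i) $ n))"
    using b_bound assms(6) by (intro norm_fps_compose_nth_le) auto
  also have "\<dots> = (1 - (cmod (a 0))\<^sup>2) / (1 + \<gamma>)"
    unfolding sum_norm_from_Omega_fps_powers_nth[OF assms(1,6)] by simp
  finally show ?thesis .
qed

end
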